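(* For $\alpha\in(-\pi/2,\pi/2]$ and $\beta\in(-\pi/4,0)\cup(0,\pi/4)$ let $$Q(\alpha)=\begin{bmatrix}\cos\alpha&\sin\alpha\\-\sin\alpha&\cos\alpha\end{bmatrix},\qquad \mathbf{h}(\beta)=\begin{bmatrix}\cos\beta\\ \jmath\sin\beta\end{bmatrix},\qquad \mathbf{g}(\alpha,\beta)=Q(\alpha)\mathbf{h}(\beta)\in\mathbb{C}^2,$$ where $\jmath=\sqrt{-1}$. For such $\alpha_p,\beta_p,\alpha_q,\beta_q$, put $\mathbf{g}_p=\mathbf{g}(\alpha_p,\beta_p)$ and $\mathbf{g}_q=\mathbf{g}(\alpha_q,\beta_q)$. Then $\lvert\mathbf{g}_p^{\mathsf H}\mathbf{g}_q\rvert=1$ if and only if $\alpha_p=\alpha_q+k\pi$ for some $k\in\mathbb{Z}$ and $\beta_p=\beta_q$.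
   Context: $X^{\mathsf H}$ denotes conjugate transpose. *)

theory Defs
  imports "HOL-Analysis.Analysis"
begin

definition Qmat :: "real \<Rightarrow> complex^2^2" where
  "Qmat a = vector [vector [complex_of_real (cos a), complex_of_real (sin a)],
                    vector [complex_of_real (- sin a), complex_of_real (cos a)]]"

definition hvec :: "real \<Rightarrow> complex^2" where
  "hvec b = vector [complex_of_real (cos b), \<i> * complex_of_real (sin b)]"

definition gvec :: "real \<Rightarrow> real \<Rightarrow> complex^2" where
  "gvec a b = Qmat a *v hvec b"

definition herm_inner :: "complex^'n \<Rightarrow> complex^'n \<Rightarrow> complex" where
  "herm_inner x y = (\<Sum>i\<in>UNIV. cnj (x $ i) * y $ i)"

end

theory Submission
  imports Defs
begin

text \<open>
  A direct computation gives
  \<open>|g\<^sub>p\<^sup>H g\<^sub>q|\<^sup>2 = cos\<^sup>2(\<alpha>\<^sub>q - \<alpha>\<^sub>p) cos\<^sup>2(\<beta>\<^sub>p - \<beta>\<^sub>q) + sin\<^sup>2(\<alpha>\<^sub>q - \<alpha>\<^sub>p) sin\<^sup>2(\<beta>\<^sub>p + \<beta>\<^sub>q)\<close>,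
  a convex combination of two numbers, the first at most 1 and the second below 1
  because \<open>|\<beta>\<^sub>p + \<beta>\<^sub>q| < \<pi>/2\<close>. It equals 1 exactly when all the weight sits on
  the first number and that number is 1, i.e. \<open>sin(\<alpha>\<^sub>q - \<alpha>\<^sub>p) = 0\<close> and
  \<open>sin(\<beta>\<^sub>p - \<beta>\<^sub>q) = 0\<close>; the latter forces \<open>\<beta>\<^sub>p = \<beta>\<^sub>q\<close> since \<open>|\<beta>\<^sub>p - \<beta>\<^sub>q| < \<pi>\<close>.
\<close>

lemma herm_inner_gvec:
  "herm_inner (gvec ap bp) (gvec aq bq) =
     Complex (cos (aq - ap) * cos (bp - bq)) (sin (aq - ap) * sin (bp + bq))"
  unfolding herm_inner_def gvec_def Qmat_def hvec_def
  by (simp add: UNIV_2 matrix_vector_mult_def vector_def Complex_eq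
      cos_diff sin_diff cos_add sin_add algebra_simps)

lemma norm_herm_inner_gvec_squared:
  "(cmod (herm_inner (gvec ap bp) (gvec aq bq)))\<^sup>2 =
     (cos (aq - ap))\<^sup>2 * (cos (bp - bq))\<^sup>2 + (sin (aq - ap))\<^sup>2 * (sin (bp + bq))\<^sup>2"
  by (simp add: herm_inner_gvec cmod_power2 power_mult_distrib)

lemma convex_combination_eq_one_iff:
  fixes c s A B :: real
  assumes "c\<^sup>2 + s\<^sup>2 = 1" and "A \<le> 1" and "B < 1"
  shows "c\<^sup>2 * A + s\<^sup>2 * B = 1 \<longleftrightarrow> s = 0 \<and> A = 1"
proof
  assume sum_one: "c\<^sup>2 * A + s\<^sup>2 * B = 1"
  have "c\<^sup>2 * A \<le> c\<^sup>2"
    using \<open>A \<le> 1\<close> by (simp add: mult_left_le)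
  moreover have "s\<^sup>2 * B < s\<^sup>2" if "s \<noteq> 0"
    using that \<open>B < 1\<close> by simp
  ultimately have "s = 0"
    using sum_one assms(1) by fastforce
  then show "s = 0 \<and> A = 1"
    using sum_one assms(1) by simp
qed (use assms(1) in simp)

lemma sin_sum_squared_less_one:
  fixes x y :: real
  assumes "\<bar>x\<bar> < pi/4" and "\<bar>y\<bar> < pi/4"
  shows "(sin (x + y))\<^sup>2 < 1"
proof -
  have "cos (x + y) > 0"
    using assms by (intro cos_gt_zero_pi) auto
  then show ?thesis
    by (simp add: sin_squared_eq)
qed

lemma sin_diff_eq_zero_iff:
  fixes x y :: real
  assumes "\<bar>x - y\<bar> < pi"
  shows "sin (x - y) = 0 \<longleftrightarrow> x = y"
  using assms sin_eq_0_pi[of "x - y"] by auto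

theorem lemma6:
  fixes ap bp aq bq :: real
  assumes "- (pi/2) < ap" "ap \<le> pi/2"
      and "- (pi/2) < aq" "aq \<le> pi/2"
      and "bp \<in> {-(pi/4)<..<0} \<union> {0<..<pi/4}"
      and "bq \<in> {-(pi/4)<..<0} \<union> {0<..<pi/4}"
  shows "cmod (herm_inner (gvec ap bp) (gvec aq bq)) = 1 \<longleftrightarrow>
         ((\<exists>k::int. ap = aq + of_int k * pi) \<and> bp = bq)"
proof -
  have bp: "\<bar>bp\<bar> < pi/4" and bq: "\<bar>bq\<bar> < pi/4"
    using assms(5,6) by auto
  have "cmod (herm_inner (gvec ap bp) (gvec aq bq)) = 1 \<longleftrightarrow>
        (cos (aq - ap))\<^sup>2 * (cos (bp - bq))\<^sup>2 + (sin (aq - ap))\<^sup>2 * (sin (bp + bq))\<^sup>2 = 1"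
    by (metis norm_herm_inner_gvec_squared abs_norm_cancel abs_square_eq_1)
  also have "\<dots> \<longleftrightarrow> sin (aq - ap) = 0 \<and> (cos (bp - bq))\<^sup>2 = 1"
    using sin_sum_squared_less_one[OF bp bq]
    by (intro convex_combination_eq_one_iff) (simp_all add: abs_square_le_1)
  also have "(cos (bp - bq))\<^sup>2 = 1 \<longleftrightarrow> bp = bq"
    using sin_diff_eq_zero_iff[of bp bq] bp bq by (simp add: cos_squared_eq)
  also have "sin (aq - ap) = 0 \<longleftrightarrow> (\<exists>k::int. ap = aq + of_int k * pi)"
    unfolding sin_zero_iff_int2
    by (metis add_diff_cancel_left' diff_add_cancel minus_diff_eq mult_minus_left of_int_minus)
  finally show ?thesis .
qed

end
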